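(* Let $G$ be a finite group, $F$ a field with $\operatorname{char}(F)\nmid|G|$, and $[\alpha]\in H^2(G,F^* )$. Then the semisimple algebra $F^\alpha G$ has a commutative simple component in its Wedderburn decomposition if and only if $[\alpha]$ lies in the image of the restriction to $\operatorname{Ext}(G/G',F^* )$ of the inflation map $H^2(G/G',F^* )\to H^2(G,F^* )$.
   Context: $H^2(X,F^* )$ is the second cohomology group with trivial action. For an abelian group $A$, $\operatorname{Ext}(A,F^* )$ is the subgroup of $H^2(A,F^* )$ consisting of classes represented by symmetric cocycles ($\beta(x,y)=\beta(y,x)$). The inflation map $H^2(G/G',F^* )\to H^2(G,F^* )$ sends the class of $\beta$ to the class of $(x,y)\mapsto\beta(xG',yG')$. For $\alpha\in Z^2(G,F^* )$ the twisted group algebra $F^\alpha G$ has $F$-basis $\{u_g\}$, $F$ central, $u_gu_h=\alpha(g,h)u_{gh}$. *)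

theory Defs
  imports "HOL-Algebra.Algebra"
begin

definition two_cocycle :: "('g, 'b) monoid_scheme \<Rightarrow> ('g \<Rightarrow> 'g \<Rightarrow> 'f::field) \<Rightarrow> bool" where
  "two_cocycle H \<alpha> \<longleftrightarrow>
     (\<forall>x\<in>carrier H. \<forall>y\<in>carrier H. \<alpha> x y \<noteq> 0) \<and>
     (\<forall>x\<in>carrier H. \<forall>y\<in>carrier H. \<forall>z\<in>carrier H.
        \<alpha> x y * \<alpha> (x \<otimes>\<^bsub>H\<^esub> y) z = \<alpha> y z * \<alpha> x (y \<otimes>\<^bsub>H\<^esub> z))"

definition cohomologous :: "('g, 'b) monoid_scheme \<Rightarrow> ('g \<Rightarrow> 'g \<Rightarrow> 'f::field) \<Rightarrow> ('g \<Rightarrow> 'g \<Rightarrow> 'f) \<Rightarrow> bool" where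
  "cohomologous H \<alpha> \<beta> \<longleftrightarrow>
     (\<exists>f :: 'g \<Rightarrow> 'f. (\<forall>x\<in>carrier H. f x \<noteq> 0) \<and>
        (\<forall>x\<in>carrier H. \<forall>y\<in>carrier H.
           \<beta> x y = \<alpha> x y * f x * f y / f (x \<otimes>\<^bsub>H\<^esub> y)))"

definition symmetric_cocycle :: "('g, 'b) monoid_scheme \<Rightarrow> ('g \<Rightarrow> 'g \<Rightarrow> 'f::field) \<Rightarrow> bool" where
  "symmetric_cocycle H \<beta> \<longleftrightarrow> two_cocycle H \<beta> \<and>
     (\<forall>x\<in>carrier H. \<forall>y\<in>carrier H. \<beta> x y = \<beta> y x)"

text \<open>The class of \<beta> lies in Ext(H,F^*): it is represented by a symmetric cocycle.\<close>
definition in_Ext :: "('g, 'b) monoid_scheme \<Rightarrow> ('g \<Rightarrow> 'g \<Rightarrow> 'f::field) \<Rightarrow> bool" where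
  "in_Ext H \<beta> \<longleftrightarrow> (\<exists>\<gamma>. symmetric_cocycle H \<gamma> \<and> cohomologous H \<beta> \<gamma>)"

abbreviation abelianization :: "('g, 'b) monoid_scheme \<Rightarrow> 'g set monoid" where
  "abelianization G \<equiv> G Mod (derived G (carrier G))"

definition inflation :: "('g, 'b) monoid_scheme \<Rightarrow> ('g set \<Rightarrow> 'g set \<Rightarrow> 'f) \<Rightarrow> 'g \<Rightarrow> 'g \<Rightarrow> 'f" where
  "inflation G \<beta> = (\<lambda>x y. \<beta> (derived G (carrier G) #>\<^bsub>G\<^esub> x) (derived G (carrier G) #>\<^bsub>G\<^esub> y))"

text \<open>Twisted group algebra F^\<alpha>G: elements are F-valued functions supported on carrier G
  (a = \<Sum> a(g) u_g), with twisted convolution product u_x u_y = \<alpha>(x,y) u_{xy}.\<close>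
definition tga_carrier :: "('g, 'b) monoid_scheme \<Rightarrow> ('g \<Rightarrow> 'f::field) set" where
  "tga_carrier G = {a. \<forall>x. x \<notin> carrier G \<longrightarrow> a x = 0}"

definition tga_mult :: "('g, 'b) monoid_scheme \<Rightarrow> ('g \<Rightarrow> 'g \<Rightarrow> 'f::field) \<Rightarrow> ('g \<Rightarrow> 'f) \<Rightarrow> ('g \<Rightarrow> 'f) \<Rightarrow> ('g \<Rightarrow> 'f)" where
  "tga_mult G \<alpha> a b = (\<lambda>z. if z \<in> carrier G then
      (\<Sum>x\<in>carrier G. \<Sum>y\<in>carrier G. if x \<otimes>\<^bsub>G\<^esub> y = z then \<alpha> x y * a x * b y else 0) else 0)"

definition tga_ideal :: "('g, 'b) monoid_scheme \<Rightarrow> ('g \<Rightarrow> 'g \<Rightarrow> 'f::field) \<Rightarrow> ('g \<Rightarrow> 'f) set \<Rightarrow> bool" where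
  "tga_ideal G \<alpha> I \<longleftrightarrow> I \<subseteq> tga_carrier G \<and> (\<lambda>_. 0) \<in> I \<and>
     (\<forall>a\<in>I. \<forall>b\<in>I. (\<lambda>x. a x + b x) \<in> I) \<and>
     (\<forall>c. \<forall>a\<in>I. (\<lambda>x. c * a x) \<in> I) \<and>
     (\<forall>r\<in>tga_carrier G. \<forall>a\<in>I. tga_mult G \<alpha> r a \<in> I \<and> tga_mult G \<alpha> a r \<in> I)"

text \<open>Simple components in the Wedderburn decomposition of the semisimple algebra F^\<alpha>G
  are its minimal nonzero two-sided ideals.\<close>
definition tga_simple_component :: "('g, 'b) monoid_scheme \<Rightarrow> ('g \<Rightarrow> 'g \<Rightarrow> 'f::field) \<Rightarrow> ('g \<Rightarrow> 'f) set \<Rightarrow> bool" where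
  "tga_simple_component G \<alpha> I \<longleftrightarrow> tga_ideal G \<alpha> I \<and> I \<noteq> {\<lambda>_. 0} \<and>
     (\<forall>J. tga_ideal G \<alpha> J \<and> J \<subseteq> I \<and> J \<noteq> {\<lambda>_. 0} \<longrightarrow> J = I)"

definition has_commutative_simple_component :: "('g, 'b) monoid_scheme \<Rightarrow> ('g \<Rightarrow> 'g \<Rightarrow> 'f::field) \<Rightarrow> bool" where
  "has_commutative_simple_component G \<alpha> \<longleftrightarrow>
     (\<exists>I. tga_simple_component G \<alpha> I \<and> (\<forall>a\<in>I. \<forall>b\<in>I. tga_mult G \<alpha> a b = tga_mult G \<alpha> b a))"

end

theory Submission
  imports Defs "HOL-Library.Function_Algebras"
begin

text \<open>
  The algebra \<open>F\<^sup>\<alpha>G\<close> has a commutative simple component iff it contains a nonzero central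
  element \<open>c\<close> with \<open>c(rs) = c(sr)\<close> for all \<open>r, s\<close>. Indeed, a product of two elements of a
  commutative ideal is such an element, and it is nonzero for some pair unless the ideal has zero
  multiplication, which Maschke averaging excludes when the characteristic of \<open>F\<close> does not
  divide \<open>|G|\<close>; conversely \<open>c F\<^sup>\<alpha>G\<close> is a commutative ideal, and any minimal ideal inside it
  is a commutative simple component.

  For such \<open>c\<close>, \<open>c u\<^sub>n\<close> is a scalar multiple of \<open>c\<close> for every \<open>n \<in> G'\<close>, because \<open>G'\<close> is generated by
  commutators and \<open>c u\<^sub>a u\<^sub>b = c u\<^sub>b u\<^sub>a\<close>. Hence \<open>c u\<^sub>x = s(x) c u\<^sub>r\<close> for the chosen representative
  \<open>r\<close> of \<open>xG'\<close>, and expanding \<open>c u\<^sub>x u\<^sub>y = c u\<^sub>y u\<^sub>x\<close> gives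
  \<open>\<alpha>(x,y) = \<beta>(xG',yG') s(x) s(y) / s(xy)\<close> with \<open>\<beta>\<close> symmetric. Conversely, if
  \<open>\<alpha>(x,y) = \<gamma>(xG',yG') h(x) h(y) / h(xy)\<close> with \<open>\<gamma>\<close> symmetric, then the basis elements
  \<open>v\<^sub>x = u\<^sub>x / h(x)\<close> multiply through \<open>\<gamma>\<close>, and \<open>\<Sum>n\<in>G'. v\<^sub>n\<close> is such an element \<open>c\<close>.
\<close>

section \<open>Functions as vectors\<close>

definition scale_fun :: "'f::field \<Rightarrow> ('g \<Rightarrow> 'f) \<Rightarrow> 'g \<Rightarrow> 'f" (infixr "*\<^sub>F" 75) where
  "c *\<^sub>F a = (\<lambda>x. c * a x)"

lemma sum_fun_apply: "(\<Sum>i\<in>S. f i) x = (\<Sum>i\<in>S. f i x)"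
  by (induction S rule: infinite_finite_induct) auto

interpretation fun_space: vector_space "scale_fun :: 'f::field \<Rightarrow> ('g \<Rightarrow> 'f) \<Rightarrow> 'g \<Rightarrow> 'f"
  by unfold_locales (simp_all add: scale_fun_def fun_eq_iff algebra_simps)

lemma (in vector_space) linear_projection_exists:
  assumes "subspace S"
  obtains p where "Vector_Spaces.linear scale scale p" "\<And>v. p v \<in> S" "\<And>v. v \<in> S \<Longrightarrow> p v = v"
proof -
  interpret pair: vector_space_pair scale scale ..
  obtain B where B: "B \<subseteq> S" "independent B" "S \<subseteq> span B"
    using basis_exists[of S] by metis
  have span_B: "span B \<subseteq> S" using span_minimal[OF B(1) assms] .
  let ?p = "pair.construct B id"
  show ?thesis
  proof
    show "Vector_Spaces.linear scale scale ?p" by (rule pair.linear_construct[OF B(2)])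
    show "?p v \<in> S" for v using pair.construct_in_span[OF B(2), of id v] span_B by auto
    show "?p v = v" if "v \<in> S" for v
    proof -
      have "?p v = id v"
        using pair.linear_eq_on[OF pair.linear_construct[OF B(2)] linear_id, of v B] that B(3)
          pair.construct_basis[OF B(2)] by blast
      then show ?thesis by simp
    qed
  qed
qed

lemma (in vector_space) subspace_eq_if_dim_le:
  assumes "subspace S" "subspace T" "S \<subseteq> T" "T \<subseteq> span W" "finite W" "dim T \<le> dim S"
  shows "S = T"
proof (rule ccontr)
  assume "S \<noteq> T"
  then obtain t where t: "t \<in> T" "t \<notin> S" using assms(3) by auto
  obtain B where B: "B \<subseteq> S" "independent B" "S \<subseteq> span B" "card B = dim S"
    using basis_exists[of S] by metis
  obtain C where C: "C \<subseteq> T" "independent C" "T \<subseteq> span C" "card C = dim T"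
    using basis_exists[of T] by metis
  have t_B: "t \<notin> span B" using span_minimal[OF B(1) assms(1)] t(2) by blast
  have ind: "independent (insert t B)" using independent_insertI[OF t_B B(2)] .
  have tB_T: "insert t B \<subseteq> T" using B(1) assms(3) t(1) by blast
  have fin_tB: "finite (insert t B)"
    using independent_span_bound[OF assms(5) ind order.trans[OF tB_T assms(4)]] by (rule conjunct1)
  have "finite C"
    using independent_span_bound[OF assms(5) C(2) order.trans[OF C(1) assms(4)]] by (rule conjunct1)
  then have "card (insert t B) \<le> card C"
    using independent_span_bound[OF _ ind order.trans[OF tB_T C(3)]] by blast
  moreover have "t \<notin> B" using t_B span_base[of t B] by blast
  ultimately show False using B(4) C(4) assms(6) fin_tB by simp
qed

lemma (in vector_space) scale_eq_imp_multiple: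
  assumes "a \<noteq> 0" "scale a x = scale b y"
  shows "\<exists>\<mu>. x = scale \<mu> y"
proof
  show "x = scale (b / a) y" using assms by (metis scale_one scale_scale divide_inverse_commute
      inverse_eq_divide left_inverse mult.commute)
qed

section \<open>Cocycles and cohomology\<close>

lemma two_cocycle_unit:
  assumes "monoid H" "two_cocycle H \<gamma>" "x \<in> carrier H"
  shows "\<gamma> \<one>\<^bsub>H\<^esub> x = \<gamma> \<one>\<^bsub>H\<^esub> \<one>\<^bsub>H\<^esub>" "\<gamma> x \<one>\<^bsub>H\<^esub> = \<gamma> \<one>\<^bsub>H\<^esub> \<one>\<^bsub>H\<^esub>"
proof -
  interpret H: monoid H by fact
  let ?e = "\<one>\<^bsub>H\<^esub>"
  have "\<gamma> ?e ?e * \<gamma> ?e x = \<gamma> ?e x * \<gamma> ?e x" "\<gamma> ?e x \<noteq> 0"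
    using assms(2,3) unfolding two_cocycle_def by (metis H.l_one H.one_closed)+
  then show "\<gamma> ?e x = \<gamma> ?e ?e" by (simp add: mult.commute)
  have "\<gamma> x ?e * \<gamma> x ?e = \<gamma> ?e ?e * \<gamma> x ?e" "\<gamma> x ?e \<noteq> 0"
    using assms(2,3) unfolding two_cocycle_def by (metis H.r_one H.one_closed)+
  then show "\<gamma> x ?e = \<gamma> ?e ?e" by simp
qed

lemma cohomologous_refl: "cohomologous H \<alpha> \<alpha>"
  unfolding cohomologous_def by (rule exI[of _ "\<lambda>_. 1"]) simp

lemma cohomologous_sym:
  assumes "monoid H" "cohomologous H \<alpha> \<beta>"
  shows "cohomologous H \<beta> \<alpha>"
proof -
  obtain f where f: "\<forall>x\<in>carrier H. f x \<noteq> 0"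
    "\<forall>x\<in>carrier H. \<forall>y\<in>carrier H. \<beta> x y = \<alpha> x y * f x * f y / f (x \<otimes>\<^bsub>H\<^esub> y)"
    using assms(2) unfolding cohomologous_def by blast
  show ?thesis unfolding cohomologous_def
  proof (intro exI[of _ "\<lambda>x. 1 / f x"] conjI ballI)
    fix x y assume "x \<in> carrier H" "y \<in> carrier H"
    then show "\<alpha> x y = \<beta> x y * (1 / f x) * (1 / f y) / (1 / f (x \<otimes>\<^bsub>H\<^esub> y))"
      using f monoid.m_closed[OF assms(1)] by simp
  qed (use f in simp)
qed

lemma cohomologous_trans:
  assumes "monoid H" "cohomologous H \<alpha> \<beta>" "cohomologous H \<beta> \<gamma>"
  shows "cohomologous H \<alpha> \<gamma>"
proof -
  obtain f where f: "\<forall>x\<in>carrier H. f x \<noteq> 0"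
    "\<forall>x\<in>carrier H. \<forall>y\<in>carrier H. \<beta> x y = \<alpha> x y * f x * f y / f (x \<otimes>\<^bsub>H\<^esub> y)"
    using assms(2) unfolding cohomologous_def by blast
  obtain g where g: "\<forall>x\<in>carrier H. g x \<noteq> 0"
    "\<forall>x\<in>carrier H. \<forall>y\<in>carrier H. \<gamma> x y = \<beta> x y * g x * g y / g (x \<otimes>\<^bsub>H\<^esub> y)"
    using assms(3) unfolding cohomologous_def by blast
  show ?thesis unfolding cohomologous_def
  proof (intro exI[of _ "\<lambda>x. f x * g x"] conjI ballI)
    fix x y assume "x \<in> carrier H" "y \<in> carrier H"
    then show "\<gamma> x y = \<alpha> x y * (f x * g x) * (f y * g y) / (f (x \<otimes>\<^bsub>H\<^esub> y) * g (x \<otimes>\<^bsub>H\<^esub> y))"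
      using f g monoid.m_closed[OF assms(1)] by simp
  qed (use f g in simp)
qed

lemma two_cocycle_cohomologous:
  assumes "monoid H" "two_cocycle H \<alpha>" "cohomologous H \<alpha> \<beta>"
  shows "two_cocycle H \<beta>"
proof -
  interpret H: monoid H by fact
  obtain f where f: "\<forall>x\<in>carrier H. f x \<noteq> 0"
    "\<forall>x\<in>carrier H. \<forall>y\<in>carrier H. \<beta> x y = \<alpha> x y * f x * f y / f (x \<otimes>\<^bsub>H\<^esub> y)"
    using assms(3) unfolding cohomologous_def by blast
  show ?thesis unfolding two_cocycle_def
  proof (intro conjI ballI)
    fix x y assume "x \<in> carrier H" "y \<in> carrier H"
    then show "\<beta> x y \<noteq> 0" using f assms(2) unfolding two_cocycle_def by simp
  next
    fix x y z assume xyz: "x \<in> carrier H" "y \<in> carrier H" "z \<in> carrier H"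
    have "\<beta> x y * \<beta> (x \<otimes>\<^bsub>H\<^esub> y) z
        = \<alpha> x y * \<alpha> (x \<otimes>\<^bsub>H\<^esub> y) z * (f x * f y * f z) / f (x \<otimes>\<^bsub>H\<^esub> y \<otimes>\<^bsub>H\<^esub> z)"
      using f xyz by simp
    also have "\<dots> = \<alpha> y z * \<alpha> x (y \<otimes>\<^bsub>H\<^esub> z) * (f x * f y * f z) / f (x \<otimes>\<^bsub>H\<^esub> (y \<otimes>\<^bsub>H\<^esub> z))"
      using assms(2) xyz unfolding two_cocycle_def by (simp add: H.m_assoc)
    also have "\<dots> = \<beta> y z * \<beta> x (y \<otimes>\<^bsub>H\<^esub> z)"
      using f xyz by simp
    finally show "\<beta> x y * \<beta> (x \<otimes>\<^bsub>H\<^esub> y) z = \<beta> y z * \<beta> x (y \<otimes>\<^bsub>H\<^esub> z)" .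
  qed
qed

section \<open>The abelianization\<close>

context group
begin

lemma sum_rcoset:
  assumes "subgroup H G" "g \<in> carrier G"
  shows "(\<Sum>n\<in>H. f (n \<otimes> g)) = (\<Sum>y\<in>H #> g. f y)"
proof -
  have "inj_on (\<lambda>n. n \<otimes> g) H"
    by (intro inj_onI) (metis assms r_cancel subgroup.mem_carrier)
  moreover have "H #> g = (\<lambda>n. n \<otimes> g) ` H" unfolding r_coset_def by auto
  ultimately show ?thesis by (simp add: sum.reindex)
qed

lemma sum_lcoset:
  assumes "subgroup H G" "g \<in> carrier G"
  shows "(\<Sum>n\<in>H. f (g \<otimes> n)) = (\<Sum>y\<in>g <# H. f y)"
proof -
  have "inj_on (\<lambda>n. g \<otimes> n) H"
    by (intro inj_onI) (metis assms l_cancel subgroup.mem_carrier)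
  moreover have "g <# H = (\<lambda>n. g \<otimes> n) ` H" unfolding l_coset_def by auto
  ultimately show ?thesis by (simp add: sum.reindex)
qed

abbreviation G' :: "'a set" where "G' \<equiv> derived G (carrier G)"

definition abel_rep :: "'a set \<Rightarrow> 'a" where
  "abel_rep p = (SOME x. x \<in> carrier G \<and> G' #> x = p)"

lemma derived_subgroup: "subgroup G' G"
  using derived_self_is_normal by (simp add: normal_def)

lemma derived_subset: "G' \<subseteq> carrier G"
  using derived_subgroup by (rule subgroup.subset)

lemma abelianization_group: "group (abelianization G)"
  by (rule normal.factorgroup_is_group[OF derived_self_is_normal])

lemma carrier_abelianization: "carrier (abelianization G) = (\<lambda>x. G' #> x) ` carrier G"
  by (auto simp: FactGroup_def RCOSETS_def)

lemma abel_coset_closed: "x \<in> carrier G \<Longrightarrow> G' #> x \<in> carrier (abelianization G)"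
  by (simp add: carrier_abelianization)

lemma abel_coset_mult:
  "x \<in> carrier G \<Longrightarrow> y \<in> carrier G \<Longrightarrow> (G' #> x) \<otimes>\<^bsub>abelianization G\<^esub> (G' #> y) = G' #> (x \<otimes> y)"
  using normal.rcos_sum[OF derived_self_is_normal] by simp

lemma abel_coset_derived: "n \<in> G' \<Longrightarrow> G' #> n = G'"
  using subgroup.rcos_const[OF derived_subgroup is_group] .

lemma abel_coset_mult_derived:
  assumes "x \<in> carrier G" "n \<in> G'"
  shows "G' #> (x \<otimes> n) = G' #> x"
proof -
  have "G' #> (x \<otimes> n) = (G' #> x) \<otimes>\<^bsub>abelianization G\<^esub> \<one>\<^bsub>abelianization G\<^esub>"
    using abel_coset_mult[OF assms(1), of n] abel_coset_derived[OF assms(2)] assms derived_subset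
    by auto
  also have "\<dots> = G' #> x"
    using monoid.r_one[OF group.is_monoid[OF abelianization_group] abel_coset_closed[OF assms(1)]] .
  finally show ?thesis .
qed

lemma commutator_in_derived:
  assumes "g \<in> carrier G" "h \<in> carrier G"
  shows "inv (g \<otimes> h) \<otimes> (h \<otimes> g) \<in> G'"
proof -
  have "inv (g \<otimes> h) \<otimes> (h \<otimes> g) = inv h \<otimes> inv g \<otimes> inv (inv h) \<otimes> inv (inv g)"
    using assms by (simp add: inv_mult_group m_assoc)
  also have "\<dots> \<in> derived_set G (carrier G)"
    by (rule UN_I[OF inv_closed[OF assms(2)]], rule UN_I[OF inv_closed[OF assms(1)]]) simp
  finally show ?thesis unfolding derived_def by (rule generate.incl)
qed

lemma abel_coset_comm: "g \<in> carrier G \<Longrightarrow> h \<in> carrier G \<Longrightarrow> G' #> (g \<otimes> h) = G' #> (h \<otimes> g)"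
  using abel_coset_mult_derived[of "g \<otimes> h" "inv (g \<otimes> h) \<otimes> (h \<otimes> g)"] commutator_in_derived
  by (simp add: m_assoc[symmetric])

lemma abel_rep:
  assumes "p \<in> carrier (abelianization G)"
  shows "abel_rep p \<in> carrier G" "G' #> abel_rep p = p"
proof -
  have "\<exists>x. x \<in> carrier G \<and> G' #> x = p" using assms carrier_abelianization by auto
  then have "abel_rep p \<in> carrier G \<and> G' #> abel_rep p = p"
    unfolding abel_rep_def by (rule someI_ex)
  then show "abel_rep p \<in> carrier G" "G' #> abel_rep p = p" by auto
qed

lemma abel_rep_coset: "x \<in> carrier G \<Longrightarrow> G' #> abel_rep (G' #> x) = G' #> x"
  using abel_rep(2)[OF abel_coset_closed] .

lemma abel_rep_closed: "x \<in> carrier G \<Longrightarrow> abel_rep (G' #> x) \<in> carrier G"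
  using abel_rep(1)[OF abel_coset_closed] .

lemma derived_mult_abel_rep:
  assumes "x \<in> carrier G"
  obtains n where "n \<in> G'" "x = n \<otimes> abel_rep (G' #> x)"
proof -
  have "x \<in> G' #> abel_rep (G' #> x)"
    using abel_rep_coset[OF assms] rcos_self[OF assms derived_subgroup] by simp
  then show ?thesis using that unfolding r_coset_def by blast
qed

lemma inflation_apply: "inflation G \<beta> x y = \<beta> (G' #> x) (G' #> y)"
  unfolding inflation_def ..

lemma cohomologous_inflation:
  assumes "cohomologous (abelianization G) \<beta> \<gamma>"
  shows "cohomologous G (inflation G \<beta>) (inflation G \<gamma>)"
proof -
  obtain f where f: "\<forall>p\<in>carrier (abelianization G). f p \<noteq> 0"
    "\<forall>p\<in>carrier (abelianization G). \<forall>q\<in>carrier (abelianization G).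
       \<gamma> p q = \<beta> p q * f p * f q / f (p \<otimes>\<^bsub>abelianization G\<^esub> q)"
    using assms unfolding cohomologous_def by blast
  show ?thesis unfolding cohomologous_def
    by (rule exI[of _ "\<lambda>x. f (G' #> x)"])
      (use f abel_coset_closed abel_coset_mult in \<open>simp add: inflation_apply\<close>)
qed

lemma two_cocycle_of_inflation:
  assumes "two_cocycle G (inflation G \<beta>)"
  shows "two_cocycle (abelianization G) \<beta>"
  using assms unfolding two_cocycle_def carrier_abelianization
  by (simp add: inflation_apply normal.rcos_sum[OF derived_self_is_normal] m_assoc)

end

section \<open>Twisted group algebras\<close>

locale twisted_group_algebra = group G for G :: "'g monoid" (structure) +
  fixes \<alpha> :: "'g \<Rightarrow> 'g \<Rightarrow> 'f::field"
  assumes finite_carrier: "finite (carrier G)" and cocycle: "two_cocycle G \<alpha>"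
begin

abbreviation A :: "('g \<Rightarrow> 'f) set" where "A \<equiv> tga_carrier G"
abbreviation tga_times (infixl "\<star>" 70) where "a \<star> b \<equiv> tga_mult G \<alpha> a b"

definition u :: "'g \<Rightarrow> 'g \<Rightarrow> 'f" where "u g = (\<lambda>z. if z = g then 1 else 0)"

lemma cocycle_neq_0: "x \<in> carrier G \<Longrightarrow> y \<in> carrier G \<Longrightarrow> \<alpha> x y \<noteq> 0"
  using cocycle unfolding two_cocycle_def by auto

lemma cocycle_identity: "x \<in> carrier G \<Longrightarrow> y \<in> carrier G \<Longrightarrow> z \<in> carrier G \<Longrightarrow>
    \<alpha> x y * \<alpha> (x \<otimes> y) z = \<alpha> y z * \<alpha> x (y \<otimes> z)"
  using cocycle unfolding two_cocycle_def by auto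

lemma cocycle_one: "x \<in> carrier G \<Longrightarrow> \<alpha> \<one> x = \<alpha> \<one> \<one>" "x \<in> carrier G \<Longrightarrow> \<alpha> x \<one> = \<alpha> \<one> \<one>"
  by (rule two_cocycle_unit[OF is_monoid cocycle]; assumption)+

lemma tga_mult_closed: "a \<star> b \<in> A"
  unfolding tga_mult_def tga_carrier_def by auto

lemma u_closed: "g \<in> carrier G \<Longrightarrow> u g \<in> A"
  unfolding u_def tga_carrier_def by auto

lemma scale_closed: "a \<in> A \<Longrightarrow> c *\<^sub>F a \<in> A"
  unfolding scale_fun_def tga_carrier_def by auto

lemma add_closed: "a \<in> A \<Longrightarrow> b \<in> A \<Longrightarrow> a + b \<in> A"
  unfolding tga_carrier_def by auto

lemma zero_closed: "0 \<in> A"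
  unfolding tga_carrier_def by auto

lemma sum_closed: "(\<And>i. i \<in> S \<Longrightarrow> f i \<in> A) \<Longrightarrow> sum f S \<in> A"
  unfolding tga_carrier_def by (auto simp: sum_fun_apply)

lemma tga_expansion: "a \<in> A \<Longrightarrow> a = (\<Sum>g\<in>carrier G. a g *\<^sub>F u g)"
proof (rule ext)
  fix z assume a: "a \<in> A"
  show "a z = (\<Sum>g\<in>carrier G. a g *\<^sub>F u g) z"
  proof (cases "z \<in> carrier G")
    case True
    have "a g * (if z = g then 1 else 0) = (if z = g then a g else 0)" for g by simp
    then show ?thesis
      using finite_carrier True by (simp add: sum_fun_apply scale_fun_def u_def sum.delta')
  next
    case False
    then show ?thesis
      using a by (auto simp: sum_fun_apply scale_fun_def u_def tga_carrier_def intro!: sum.neutral)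
  qed
qed

lemma tga_mult_add_left: "(a + b) \<star> c = a \<star> c + b \<star> c"
  by (auto simp: tga_mult_def fun_eq_iff sum.distrib[symmetric] algebra_simps intro!: sum.cong)

lemma tga_mult_add_right: "c \<star> (a + b) = c \<star> a + c \<star> b"
  by (auto simp: tga_mult_def fun_eq_iff sum.distrib[symmetric] algebra_simps intro!: sum.cong)

lemma tga_mult_scale_left: "(k *\<^sub>F a) \<star> b = k *\<^sub>F (a \<star> b)"
  by (auto simp: tga_mult_def fun_eq_iff scale_fun_def sum_distrib_left algebra_simps
      intro!: sum.cong)

lemma tga_mult_scale_right: "b \<star> (k *\<^sub>F a) = k *\<^sub>F (b \<star> a)"
  by (auto simp: tga_mult_def fun_eq_iff scale_fun_def sum_distrib_left algebra_simps
      intro!: sum.cong)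

lemma tga_mult_zero [simp]: "0 \<star> b = 0" "b \<star> 0 = 0"
  unfolding tga_mult_def by (simp_all add: fun_eq_iff cong: if_cong)

lemma tga_mult_sum_left: "(\<Sum>i\<in>S. f i) \<star> b = (\<Sum>i\<in>S. f i \<star> b)"
proof (induction S rule: infinite_finite_induct)
  case (insert x F)
  show ?case by (simp only: sum.insert[OF insert.hyps] tga_mult_add_left insert.IH)
qed (metis sum.infinite sum.empty tga_mult_zero(1))+

lemma tga_mult_sum_right: "b \<star> (\<Sum>i\<in>S. f i) = (\<Sum>i\<in>S. b \<star> f i)"
proof (induction S rule: infinite_finite_induct)
  case (insert x F)
  show ?case by (simp only: sum.insert[OF insert.hyps] tga_mult_add_right insert.IH)
qed (metis sum.infinite sum.empty tga_mult_zero(2))+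

lemmas tga_mult_linear =
  tga_mult_sum_left tga_mult_sum_right tga_mult_scale_left tga_mult_scale_right

lemma tga_mult_apply:
  assumes "z \<in> carrier G"
  shows "(a \<star> b) z = (\<Sum>x\<in>carrier G. \<alpha> x (inv x \<otimes> z) * a x * b (inv x \<otimes> z))"
proof -
  have "(\<Sum>y\<in>carrier G. if x \<otimes> y = z then \<alpha> x y * a x * b y else 0)
      = \<alpha> x (inv x \<otimes> z) * a x * b (inv x \<otimes> z)" if x: "x \<in> carrier G" for x
  proof -
    have "(\<Sum>y\<in>carrier G. if x \<otimes> y = z then \<alpha> x y * a x * b y else 0)
        = (\<Sum>y\<in>carrier G. if y = inv x \<otimes> z then \<alpha> x y * a x * b y else 0)"
      using x assms inv_solve_left by (intro sum.cong) auto
    also have "\<dots> = \<alpha> x (inv x \<otimes> z) * a x * b (inv x \<otimes> z)"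
      using x assms finite_carrier by simp
    finally show ?thesis .
  qed
  then show ?thesis using assms unfolding tga_mult_def by (auto intro: sum.cong)
qed

lemma u_mult_apply:
  "g \<in> carrier G \<Longrightarrow> z \<in> carrier G \<Longrightarrow> (u g \<star> b) z = \<alpha> g (inv g \<otimes> z) * b (inv g \<otimes> z)"
  using finite_carrier
  by (simp add: tga_mult_apply u_def if_distrib if_distribR sum.delta cong: if_cong)

lemma mult_u_apply:
  assumes h: "h \<in> carrier G" and z: "z \<in> carrier G"
  shows "(a \<star> u h) z = \<alpha> (z \<otimes> inv h) h * a (z \<otimes> inv h)"
proof -
  have "(\<Sum>y\<in>carrier G. if x \<otimes> y = z then \<alpha> x y * a x * u h y else 0)
      = (if x = z \<otimes> inv h then \<alpha> x h * a x else 0)" if x: "x \<in> carrier G" for x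
  proof -
    have "(\<Sum>y\<in>carrier G. if x \<otimes> y = z then \<alpha> x y * a x * u h y else 0)
        = (\<Sum>y\<in>carrier G. if y = h then (if x \<otimes> h = z then \<alpha> x h * a x else 0) else 0)"
      by (intro sum.cong) (auto simp: u_def)
    also have "\<dots> = (if x = z \<otimes> inv h then \<alpha> x h * a x else 0)"
      using finite_carrier x z h inv_solve_right by auto
    finally show ?thesis .
  qed
  then have "(a \<star> u h) z = (\<Sum>x\<in>carrier G. if x = z \<otimes> inv h then \<alpha> x h * a x else 0)"
    using z unfolding tga_mult_def by (auto intro: sum.cong)
  also have "\<dots> = \<alpha> (z \<otimes> inv h) h * a (z \<otimes> inv h)"
    using finite_carrier z h by simp
  finally show ?thesis .
qed

lemma u_mult_u: "g \<in> carrier G \<Longrightarrow> h \<in> carrier G \<Longrightarrow> u g \<star> u h = \<alpha> g h *\<^sub>F u (g \<otimes> h)"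
proof (rule ext)
  fix z assume g: "g \<in> carrier G" and h: "h \<in> carrier G"
  show "(u g \<star> u h) z = (\<alpha> g h *\<^sub>F u (g \<otimes> h)) z"
  proof (cases "z \<in> carrier G")
    case True
    have "(inv g \<otimes> z = h) = (z = g \<otimes> h)" using True g h inv_solve_left' by auto
    moreover have "(u g \<star> u h) z = \<alpha> g (inv g \<otimes> z) * u h (inv g \<otimes> z)"
      using True g u_mult_apply by blast
    ultimately show ?thesis using True g h by (auto simp: scale_fun_def u_def)
  next
    case False
    then show ?thesis
      using tga_mult_closed[of "u g" "u h"] g h by (auto simp: tga_carrier_def scale_fun_def u_def)
  qed
qed

lemma tga_mult_assoc:
  assumes "a \<in> A" "b \<in> A" "c \<in> A"
  shows "a \<star> b \<star> c = a \<star> (b \<star> c)"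
proof -
  let ?S = "carrier G"
  have u_assoc: "u g \<star> u h \<star> u k = u g \<star> (u h \<star> u k)"
    if "g \<in> ?S" "h \<in> ?S" "k \<in> ?S" for g h k
    using that
    by (simp add: u_mult_u tga_mult_scale_left tga_mult_scale_right cocycle_identity m_assoc)
  have "a \<star> b \<star> c = (\<Sum>g\<in>?S. a g *\<^sub>F u g) \<star> (\<Sum>h\<in>?S. b h *\<^sub>F u h) \<star> (\<Sum>k\<in>?S. c k *\<^sub>F u k)"
    using assms by (simp only: tga_expansion[symmetric])
  also have "\<dots> = (\<Sum>k\<in>?S. \<Sum>h\<in>?S. \<Sum>g\<in>?S. (c k * (b h * a g)) *\<^sub>F (u g \<star> u h \<star> u k))"
    by (simp add: tga_mult_linear fun_space.scale_sum_right mult.assoc)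
  also have "\<dots> = (\<Sum>k\<in>?S. \<Sum>h\<in>?S. \<Sum>g\<in>?S. (c k * (b h * a g)) *\<^sub>F (u g \<star> (u h \<star> u k)))"
    using u_assoc by (intro sum.cong refl) simp
  also have "\<dots> = (\<Sum>g\<in>?S. a g *\<^sub>F u g) \<star> ((\<Sum>h\<in>?S. b h *\<^sub>F u h) \<star> (\<Sum>k\<in>?S. c k *\<^sub>F u k))"
    by (simp add: tga_mult_linear fun_space.scale_sum_right mult.assoc)
  also have "\<dots> = a \<star> (b \<star> c)"
    using assms by (simp only: tga_expansion[symmetric])
  finally show ?thesis .
qed

definition tga_one :: "'g \<Rightarrow> 'f" where "tga_one = (1 / \<alpha> \<one> \<one>) *\<^sub>F u \<one>"

lemma tga_one_closed: "tga_one \<in> A"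
  unfolding tga_one_def by (intro scale_closed u_closed) simp

lemma u_one: "u \<one> = \<alpha> \<one> \<one> *\<^sub>F tga_one"
  using cocycle_neq_0[of \<one> \<one>] by (simp add: tga_one_def)

lemma tga_one_mult: "b \<in> A \<Longrightarrow> tga_one \<star> b = b"
proof (rule ext)
  fix z assume b: "b \<in> A"
  show "(tga_one \<star> b) z = b z"
  proof (cases "z \<in> carrier G")
    case True
    then show ?thesis using cocycle_neq_0[of \<one> \<one>]
      unfolding tga_one_def tga_mult_scale_left
      by (simp add: scale_fun_def u_mult_apply cocycle_one(1)[of z])
  next
    case False
    then show ?thesis using b tga_mult_closed[of tga_one b] by (simp add: tga_carrier_def)
  qed
qed

lemma tga_mult_one: "b \<in> A \<Longrightarrow> b \<star> tga_one = b"
proof (rule ext)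
  fix z assume b: "b \<in> A"
  show "(b \<star> tga_one) z = b z"
  proof (cases "z \<in> carrier G")
    case True
    then show ?thesis using cocycle_neq_0[of \<one> \<one>]
      unfolding tga_one_def tga_mult_scale_right
      by (simp add: scale_fun_def mult_u_apply cocycle_one(2)[of z])
  next
    case False
    then show ?thesis using b tga_mult_closed[of b tga_one] by (simp add: tga_carrier_def)
  qed
qed

lemma central_if_central_on_basis:
  assumes "\<And>g. g \<in> carrier G \<Longrightarrow> c \<star> u g = u g \<star> c" and r: "r \<in> A"
  shows "c \<star> r = r \<star> c"
proof -
  have "c \<star> r = (\<Sum>g\<in>carrier G. r g *\<^sub>F (c \<star> u g))"
    by (subst tga_expansion[OF r]) (simp add: tga_mult_linear)
  also have "\<dots> = (\<Sum>g\<in>carrier G. r g *\<^sub>F (u g \<star> c))" using assms(1) by simp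
  also have "\<dots> = r \<star> c"
    by (subst (2) tga_expansion[OF r]) (simp add: tga_mult_linear)
  finally show ?thesis .
qed

lemma swap_if_swaps_on_basis:
  assumes "\<And>g k. g \<in> carrier G \<Longrightarrow> k \<in> carrier G \<Longrightarrow> c \<star> (u g \<star> u k) = c \<star> (u k \<star> u g)"
    and r: "r \<in> A" and t: "t \<in> A"
  shows "c \<star> (r \<star> t) = c \<star> (t \<star> r)"
proof -
  let ?S = "carrier G"
  have "c \<star> (r \<star> t) = c \<star> ((\<Sum>g\<in>?S. r g *\<^sub>F u g) \<star> (\<Sum>k\<in>?S. t k *\<^sub>F u k))"
    using r t by (simp only: tga_expansion[symmetric])
  also have "\<dots> = (\<Sum>k\<in>?S. \<Sum>g\<in>?S. (t k * r g) *\<^sub>F (c \<star> (u g \<star> u k)))"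
    by (simp add: tga_mult_linear fun_space.scale_sum_right)
  also have "\<dots> = (\<Sum>g\<in>?S. \<Sum>k\<in>?S. (r g * t k) *\<^sub>F (c \<star> (u k \<star> u g)))"
    using assms(1) by (subst sum.swap) (simp add: mult.commute)
  also have "\<dots> = c \<star> ((\<Sum>k\<in>?S. t k *\<^sub>F u k) \<star> (\<Sum>g\<in>?S. r g *\<^sub>F u g))"
    by (simp add: tga_mult_linear fun_space.scale_sum_right)
  also have "\<dots> = c \<star> (t \<star> r)"
    using r t by (simp only: tga_expansion[symmetric])
  finally show ?thesis .
qed

definition u_inv :: "'g \<Rightarrow> 'g \<Rightarrow> 'f" where
  "u_inv g = (1 / (\<alpha> g (inv g) * \<alpha> \<one> \<one>)) *\<^sub>F u (inv g)"

lemma u_inv_closed: "g \<in> carrier G \<Longrightarrow> u_inv g \<in> A"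
  unfolding u_inv_def by (intro scale_closed u_closed) simp

lemma cocycle_inv_comm: "g \<in> carrier G \<Longrightarrow> \<alpha> (inv g) g = \<alpha> g (inv g)"
  using cocycle_identity[of g "inv g" g] cocycle_one[of g] cocycle_neq_0[of \<one> \<one>] by simp

lemma u_mult_u_inv: "g \<in> carrier G \<Longrightarrow> u g \<star> u_inv g = tga_one"
  using cocycle_neq_0[of g "inv g"] cocycle_neq_0[of \<one> \<one>]
  by (simp add: u_inv_def tga_one_def tga_mult_scale_right u_mult_u)

lemma u_inv_mult_u: "g \<in> carrier G \<Longrightarrow> u_inv g \<star> u g = tga_one"
  using cocycle_neq_0[of g "inv g"] cocycle_neq_0[of \<one> \<one>]
  by (simp add: u_inv_def tga_one_def tga_mult_scale_left u_mult_u cocycle_inv_comm)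

lemma u_mult_u_inv_mult:
  assumes h: "h \<in> carrier G" and k: "k \<in> carrier G"
  shows "u h \<star> u_inv (k \<otimes> h) = \<alpha> k h *\<^sub>F u_inv k"
proof -
  have hk: "h \<otimes> inv (k \<otimes> h) = inv k" using h k by (simp add: inv_mult_group m_assoc[symmetric])
  have "\<alpha> k h * \<alpha> (k \<otimes> h) (inv (k \<otimes> h)) = \<alpha> h (inv (k \<otimes> h)) * \<alpha> k (inv k)"
    using cocycle_identity[of k h "inv (k \<otimes> h)"] h k hk by simp
  then have "\<alpha> h (inv (k \<otimes> h)) / (\<alpha> (k \<otimes> h) (inv (k \<otimes> h)) * \<alpha> \<one> \<one>)
      = \<alpha> k h * (1 / (\<alpha> k (inv k) * \<alpha> \<one> \<one>))"
    using h k cocycle_neq_0[of "k \<otimes> h" "inv (k \<otimes> h)"] cocycle_neq_0[of k "inv k"]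
      cocycle_neq_0[of \<one> \<one>] by (simp add: field_simps)
  then show ?thesis
    using h k hk by (simp add: u_inv_def tga_mult_scale_right u_mult_u)
qed

section \<open>Ideals and semisimplicity\<close>

lemma tga_idealD:
  assumes "tga_ideal G \<alpha> I"
  shows "I \<subseteq> A" "0 \<in> I" "\<And>a b. a \<in> I \<Longrightarrow> b \<in> I \<Longrightarrow> a + b \<in> I"
    "\<And>a c. a \<in> I \<Longrightarrow> c *\<^sub>F a \<in> I"
    "\<And>a r. a \<in> I \<Longrightarrow> r \<in> A \<Longrightarrow> r \<star> a \<in> I"
    "\<And>a r. a \<in> I \<Longrightarrow> r \<in> A \<Longrightarrow> a \<star> r \<in> I"
  using assms unfolding tga_ideal_def scale_fun_def plus_fun_def zero_fun_def by auto

lemma tga_ideal_subspace: "tga_ideal G \<alpha> I \<Longrightarrow> fun_space.subspace I"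
  using tga_idealD[of I] unfolding fun_space.subspace_def by blast

lemma tga_carrier_subset_span: "A \<subseteq> fun_space.span (u ` carrier G)"
proof
  fix a assume "a \<in> A"
  have "(\<Sum>g\<in>carrier G. a g *\<^sub>F u g) \<in> fun_space.span (u ` carrier G)"
    by (intro fun_space.span_sum fun_space.span_scale fun_space.span_base) auto
  then show "a \<in> fun_space.span (u ` carrier G)" using tga_expansion[OF \<open>a \<in> A\<close>] by simp
qed

lemma simple_component_within:
  assumes "tga_ideal G \<alpha> J" "J \<noteq> {0}"
  obtains K where "tga_simple_component G \<alpha> K" "K \<subseteq> J"
proof -
  let ?P = "\<lambda>K. tga_ideal G \<alpha> K \<and> K \<subseteq> J \<and> K \<noteq> {0}"
  obtain K where K: "?P K" and K_min: "\<And>K'. ?P K' \<Longrightarrow> fun_space.dim K \<le> fun_space.dim K'"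
    using ex_has_least_nat[of ?P J fun_space.dim] assms by blast
  have "tga_simple_component G \<alpha> K"
    unfolding tga_simple_component_def
  proof (intro conjI allI impI)
    show "tga_ideal G \<alpha> K" "K \<noteq> {\<lambda>_. 0}" using K by (simp_all add: zero_fun_def)
    fix K' assume K': "tga_ideal G \<alpha> K' \<and> K' \<subseteq> K \<and> K' \<noteq> {\<lambda>_. 0}"
    then have "fun_space.dim K \<le> fun_space.dim K'" using K K_min by (auto simp: zero_fun_def)
    moreover have "K \<subseteq> fun_space.span (u ` carrier G)"
      using tga_idealD(1)[of K] K tga_carrier_subset_span by blast
    ultimately show "K' = K"
      using fun_space.subspace_eq_if_dim_le[of K' K "u ` carrier G"] K' K tga_ideal_subspace
        finite_carrier by blast
  qed
  then show ?thesis using K that by blast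
qed

text \<open>Maschke's averaging of a linear projection \<open>p\<close> onto an ideal: the result is again a
  projection onto the ideal, and it commutes with right multiplication.\<close>

definition maschke_average :: "(('g \<Rightarrow> 'f) \<Rightarrow> 'g \<Rightarrow> 'f) \<Rightarrow> ('g \<Rightarrow> 'f) \<Rightarrow> 'g \<Rightarrow> 'f" where
  "maschke_average p y = (1 / of_nat (order G)) *\<^sub>F (\<Sum>g\<in>carrier G. p (y \<star> u_inv g) \<star> u g)"

context
  fixes p :: "('g \<Rightarrow> 'f) \<Rightarrow> 'g \<Rightarrow> 'f"
  assumes p_linear: "Vector_Spaces.linear scale_fun scale_fun p" and p_closed: "\<And>v. p v \<in> A"
begin

interpretation p: Vector_Spaces.linear scale_fun scale_fun p by (rule p_linear)

lemma maschke_average_mult_u: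
  assumes y: "y \<in> A" and h: "h \<in> carrier G"
  shows "maschke_average p (y \<star> u h) = maschke_average p y \<star> u h"
proof -
  have bij: "bij_betw (\<lambda>k. k \<otimes> h) (carrier G) (carrier G)"
    by (rule bij_betw_byWitness[where f'="\<lambda>g. g \<otimes> inv h"]) (use h in \<open>auto simp: m_assoc\<close>)
  have "p (y \<star> u h \<star> u_inv (k \<otimes> h)) \<star> u (k \<otimes> h) = p (y \<star> u_inv k) \<star> u k \<star> u h"
    if k: "k \<in> carrier G" for k
  proof -
    have a: "\<alpha> k h \<noteq> 0" using cocycle_neq_0 k h by auto
    have "y \<star> u h \<star> u_inv (k \<otimes> h) = \<alpha> k h *\<^sub>F (y \<star> u_inv k)"
      using tga_mult_assoc[OF y u_closed[OF h] u_inv_closed[of "k \<otimes> h"]] k h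
      by (simp add: u_mult_u_inv_mult tga_mult_scale_right)
    moreover have "u (k \<otimes> h) = (1 / \<alpha> k h) *\<^sub>F (u k \<star> u h)"
      using k h a by (simp add: u_mult_u)
    ultimately have "p (y \<star> u h \<star> u_inv (k \<otimes> h)) \<star> u (k \<otimes> h) = p (y \<star> u_inv k) \<star> (u k \<star> u h)"
      using a by (simp add: p.scale tga_mult_scale_left tga_mult_scale_right)
    also have "\<dots> = p (y \<star> u_inv k) \<star> u k \<star> u h"
      using tga_mult_assoc[OF p_closed u_closed[OF k] u_closed[OF h]] by simp
    finally show ?thesis .
  qed
  then have "(\<Sum>g\<in>carrier G. p (y \<star> u h \<star> u_inv g) \<star> u g)
      = (\<Sum>k\<in>carrier G. p (y \<star> u_inv k) \<star> u k \<star> u h)"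
    using sum.reindex_bij_betw[OF bij, symmetric] by (metis (no_types, lifting) sum.cong)
  then show ?thesis
    unfolding maschke_average_def by (simp add: tga_mult_sum_left tga_mult_scale_left)
qed

lemma maschke_average_mult:
  assumes z: "z \<in> A" and r: "r \<in> A"
  shows "maschke_average p (z \<star> r) = maschke_average p z \<star> r"
proof -
  have lin: "maschke_average p (\<Sum>h\<in>S. c h *\<^sub>F x h) = (\<Sum>h\<in>S. c h *\<^sub>F maschke_average p (x h))"
    for S c x
  proof -
    have "maschke_average p (\<Sum>h\<in>S. c h *\<^sub>F x h)
        = (1 / of_nat (order G)) *\<^sub>F (\<Sum>g\<in>carrier G. \<Sum>h\<in>S. c h *\<^sub>F (p (x h \<star> u_inv g) \<star> u g))"
      unfolding maschke_average_def by (simp add: tga_mult_linear p.sum p.scale)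
    also have "\<dots> = (\<Sum>h\<in>S. c h *\<^sub>F maschke_average p (x h))"
      unfolding maschke_average_def
      by (subst sum.swap) (simp add: fun_space.scale_sum_right mult.commute)
    finally show ?thesis .
  qed
  have "maschke_average p (z \<star> r) = maschke_average p (\<Sum>h\<in>carrier G. r h *\<^sub>F (z \<star> u h))"
    by (subst (1) tga_expansion[OF r]) (simp add: tga_mult_linear)
  also have "\<dots> = (\<Sum>h\<in>carrier G. r h *\<^sub>F maschke_average p (z \<star> u h))"
    by (rule lin)
  also have "\<dots> = (\<Sum>h\<in>carrier G. r h *\<^sub>F (maschke_average p z \<star> u h))"
    using maschke_average_mult_u[OF z] by simp
  also have "\<dots> = maschke_average p z \<star> r"
    by (subst (2) tga_expansion[OF r]) (simp add: tga_mult_linear)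
  finally show ?thesis .
qed

end

lemma square_zero_ideal:
  assumes I: "tga_ideal G \<alpha> I" and square_zero: "\<forall>a\<in>I. \<forall>b\<in>I. a \<star> b = 0"
    and char: "of_nat (order G) \<noteq> (0::'f)"
  shows "I = {0}"
proof -
  note I_props = tga_idealD[OF I]
  obtain p where p: "Vector_Spaces.linear scale_fun scale_fun p" "\<And>v. p v \<in> I" "\<And>v. v \<in> I \<Longrightarrow> p v = v"
    using fun_space.linear_projection_exists[OF tga_ideal_subspace[OF I]] by blast
  have p_closed: "p v \<in> A" for v using p(2) I_props(1) by blast
  have average_closed: "maschke_average p y \<in> I" for y
    unfolding maschke_average_def
    by (intro I_props(4) fun_space.subspace_sum[OF tga_ideal_subspace[OF I]] I_props(6) p(2)
        u_closed)
  have "r = 0" if r: "r \<in> I" for r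
  proof -
    have rA: "r \<in> A" using r I_props(1) by blast
    have "(\<Sum>g\<in>carrier G. p (r \<star> u_inv g) \<star> u g) = (\<Sum>g\<in>carrier G. r)"
    proof (intro sum.cong refl)
      fix g assume g: "g \<in> carrier G"
      have "p (r \<star> u_inv g) \<star> u g = r \<star> u_inv g \<star> u g"
        using p(3) I_props(6) r u_inv_closed g by simp
      also have "\<dots> = r"
        using tga_mult_assoc rA u_inv_closed u_closed g u_inv_mult_u tga_mult_one by simp
      finally show "p (r \<star> u_inv g) \<star> u g = r" .
    qed
    then have "r = maschke_average p r"
      unfolding maschke_average_def fun_space.sum_constant_scale using char by (simp add: order_def)
    also have "\<dots> = maschke_average p tga_one \<star> r"
      using maschke_average_mult[OF p(1) p_closed tga_one_closed rA] tga_one_mult[OF rA] by simp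
    also have "\<dots> = 0" using square_zero average_closed r by blast
    finally show ?thesis .
  qed
  then show ?thesis using I_props(2) by blast
qed

section \<open>Abelianizing elements\<close>

definition abelianizing :: "('g \<Rightarrow> 'f) \<Rightarrow> bool" where
  "abelianizing c \<longleftrightarrow> c \<in> A \<and> c \<noteq> 0 \<and> (\<forall>r\<in>A. c \<star> r = r \<star> c) \<and> (\<forall>r\<in>A. \<forall>s\<in>A. c \<star> (r \<star> s) = c \<star> (s \<star> r))"

lemma commutative_ideal_abelianizing:
  assumes I: "tga_ideal G \<alpha> I" and comm: "\<forall>x\<in>I. \<forall>y\<in>I. x \<star> y = y \<star> x"
    and a: "a \<in> I" and b: "b \<in> I" and ba: "b \<star> a \<noteq> 0"
  shows "abelianizing (b \<star> a)"
proof -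
  note I_props = tga_idealD[OF I]
  have aA: "a \<in> A" and bA: "b \<in> A" using a b I_props(1) by auto
  have central: "b \<star> a \<star> r = r \<star> (b \<star> a)" if r: "r \<in> A" for r
  proof -
    have "b \<star> a \<star> r = b \<star> (a \<star> r)" using tga_mult_assoc[OF bA aA r] .
    also have "\<dots> = a \<star> r \<star> b" using comm I_props(6)[OF a r] b by blast
    also have "\<dots> = a \<star> (r \<star> b)" using tga_mult_assoc[OF aA r bA] .
    also have "\<dots> = r \<star> b \<star> a" using comm I_props(5)[OF b r] a by blast
    also have "\<dots> = r \<star> (b \<star> a)" using tga_mult_assoc[OF r bA aA] .
    finally show ?thesis .
  qed
  have "b \<star> a \<star> (r \<star> s) = b \<star> a \<star> (s \<star> r)" if r: "r \<in> A" and s: "s \<in> A" for r s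
  proof -
    have "a \<star> r \<star> (s \<star> b) = a \<star> (r \<star> s \<star> b)"
      using tga_mult_assoc[OF aA r tga_mult_closed] tga_mult_assoc[OF r s bA] by simp
    also have "\<dots> = r \<star> s \<star> b \<star> a" using comm I_props(5)[OF b tga_mult_closed] a by blast
    also have "\<dots> = r \<star> s \<star> (b \<star> a)" using tga_mult_assoc[OF tga_mult_closed bA aA] .
    finally have left: "a \<star> r \<star> (s \<star> b) = r \<star> s \<star> (b \<star> a)" .
    have "a \<star> r \<star> (s \<star> b) = s \<star> b \<star> (a \<star> r)" using comm I_props(5,6) a b r s by blast
    also have "\<dots> = s \<star> (b \<star> a \<star> r)"
      using tga_mult_assoc[OF s bA tga_mult_closed] tga_mult_assoc[OF bA aA r] by simp
    also have "\<dots> = s \<star> r \<star> (b \<star> a)"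
      using central[OF r] tga_mult_assoc[OF s r tga_mult_closed] by simp
    finally have right: "a \<star> r \<star> (s \<star> b) = s \<star> r \<star> (b \<star> a)" .
    have "b \<star> a \<star> (r \<star> s) = r \<star> s \<star> (b \<star> a)" using central[OF tga_mult_closed] .
    also have "\<dots> = s \<star> r \<star> (b \<star> a)" using left right by simp
    also have "\<dots> = b \<star> a \<star> (s \<star> r)" using central[OF tga_mult_closed] by simp
    finally show ?thesis .
  qed
  then show ?thesis unfolding abelianizing_def using central ba tga_mult_closed by blast
qed

context
  fixes c assumes c: "abelianizing c"
begin

lemma abelianizing_closed: "c \<in> A"
  and abelianizing_neq_0: "c \<noteq> 0"
  and abelianizing_central: "r \<in> A \<Longrightarrow> c \<star> r = r \<star> c"
  and abelianizing_swap: "r \<in> A \<Longrightarrow> s \<in> A \<Longrightarrow> c \<star> (r \<star> s) = c \<star> (s \<star> r)"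
  using c unfolding abelianizing_def by auto

lemma abelianizing_ideal: "tga_ideal G \<alpha> {c \<star> r | r. r \<in> A}"
proof -
  let ?J = "{c \<star> r | r. r \<in> A}"
  show ?thesis unfolding tga_ideal_def
  proof (intro conjI ballI allI)
    show "?J \<subseteq> A" using tga_mult_closed by blast
    have "0 \<in> ?J" using zero_closed tga_mult_zero(2)[of c]
      by (metis (mono_tags, lifting) mem_Collect_eq)
    then show "(\<lambda>_. 0) \<in> ?J" by (simp only: zero_fun_def)
    fix a b assume "a \<in> ?J" "b \<in> ?J"
    then obtain r t where "r \<in> A" "a = c \<star> r" "t \<in> A" "b = c \<star> t" by blast
    then have "r + t \<in> A" "a + b = c \<star> (r + t)" by (simp_all add: add_closed tga_mult_add_right)
    moreover have "(\<lambda>x. a x + b x) = a + b" by (simp add: plus_fun_def)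
    ultimately show "(\<lambda>x. a x + b x) \<in> ?J" by auto
  next
    fix k a assume "a \<in> ?J"
    then obtain r where "r \<in> A" "a = c \<star> r" by blast
    then have "k *\<^sub>F r \<in> A" "k *\<^sub>F a = c \<star> (k *\<^sub>F r)"
      by (simp_all add: scale_closed tga_mult_scale_right)
    moreover have "(\<lambda>x. k * a x) = k *\<^sub>F a" by (simp add: scale_fun_def)
    ultimately show "(\<lambda>x. k * a x) \<in> ?J" by auto
  next
    fix q a assume q: "q \<in> A" and "a \<in> ?J"
    then obtain r where r: "r \<in> A" "a = c \<star> r" by blast
    have "q \<star> a = c \<star> (q \<star> r)"
      using r tga_mult_assoc[OF q abelianizing_closed r(1)]
        tga_mult_assoc[OF abelianizing_closed q r(1)] abelianizing_central[OF q] by simp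
    then show "q \<star> a \<in> ?J" using tga_mult_closed by blast
    have "a \<star> q = c \<star> (r \<star> q)" using r tga_mult_assoc[OF abelianizing_closed r(1) q] by simp
    then show "a \<star> q \<in> ?J" using tga_mult_closed by blast
  qed
qed

lemma abelianizing_mult_mult:
  assumes x: "x \<in> A" and y: "y \<in> A"
  shows "c \<star> x \<star> (c \<star> y) = c \<star> (c \<star> (x \<star> y))"
proof -
  have "c \<star> x \<star> (c \<star> y) = c \<star> (x \<star> c \<star> y)"
    using tga_mult_assoc[OF abelianizing_closed x tga_mult_closed]
      tga_mult_assoc[OF x abelianizing_closed y]
    by simp
  also have "\<dots> = c \<star> (c \<star> (x \<star> y))"
    using abelianizing_central[OF x] tga_mult_assoc[OF abelianizing_closed x y] by simp
  finally show ?thesis .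
qed

lemma abelianizing_imp_commutative_simple_component: "has_commutative_simple_component G \<alpha>"
proof -
  let ?J = "{c \<star> r | r. r \<in> A}"
  have "c \<in> ?J" using tga_one_closed tga_mult_one[OF abelianizing_closed] by force
  then have "?J \<noteq> {0}" using abelianizing_neq_0 by blast
  then obtain K where K: "tga_simple_component G \<alpha> K" "K \<subseteq> ?J"
    using simple_component_within[OF abelianizing_ideal] by blast
  have "a \<star> b = b \<star> a" if "a \<in> ?J" "b \<in> ?J" for a b
    using that abelianizing_mult_mult abelianizing_swap by force
  then show ?thesis unfolding has_commutative_simple_component_def using K by blast
qed

lemma abelianizing_mult_u_neq_0: "g \<in> carrier G \<Longrightarrow> c \<star> u g \<noteq> 0"
proof
  assume g: "g \<in> carrier G" and "c \<star> u g = 0"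
  then have "c \<star> u g \<star> u_inv g = 0" by simp
  moreover have "c \<star> u g \<star> u_inv g = c"
    using tga_mult_assoc[OF abelianizing_closed u_closed[OF g] u_inv_closed[OF g]]
      u_mult_u_inv[OF g] tga_mult_one[OF abelianizing_closed] by simp
  ultimately show False using abelianizing_neq_0 by simp
qed

lemma abelianizing_mult_u_mult_u:
  "g \<in> carrier G \<Longrightarrow> h \<in> carrier G \<Longrightarrow> c \<star> u g \<star> u h = \<alpha> g h *\<^sub>F (c \<star> u (g \<otimes> h))"
  using tga_mult_assoc[OF abelianizing_closed u_closed u_closed]
  by (simp add: u_mult_u tga_mult_scale_right)

lemma abelianizing_mult_u_comm:
  "g \<in> carrier G \<Longrightarrow> h \<in> carrier G \<Longrightarrow> c \<star> u g \<star> u h = c \<star> u h \<star> u g"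
  using abelianizing_swap u_closed tga_mult_assoc[OF abelianizing_closed u_closed u_closed] by metis

lemma abelianizing_mult_u_commutator:
  assumes a: "a \<in> carrier G" and b: "b \<in> carrier G"
  shows "\<exists>\<mu>. c \<star> u (a \<otimes> b \<otimes> inv a \<otimes> inv b) = \<mu> *\<^sub>F c"
proof -
  have ba: "b \<otimes> a \<otimes> inv a \<otimes> inv b = \<one>" using a b by (simp add: m_assoc)
  have "(\<alpha> a b * \<alpha> (a \<otimes> b) (inv a) * \<alpha> (a \<otimes> b \<otimes> inv a) (inv b)) *\<^sub>F (c \<star> u (a \<otimes> b \<otimes> inv a \<otimes> inv b))
      = c \<star> u a \<star> u b \<star> u (inv a) \<star> u (inv b)"
    using a b by (simp add: abelianizing_mult_u_mult_u tga_mult_scale_left mult.assoc)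
  also have "\<dots> = c \<star> u b \<star> u a \<star> u (inv a) \<star> u (inv b)"
    using abelianizing_mult_u_comm[OF a b] by simp
  also have "\<dots> = (\<alpha> b a * \<alpha> (b \<otimes> a) (inv a) * \<alpha> (b \<otimes> a \<otimes> inv a) (inv b) * \<alpha> \<one> \<one>) *\<^sub>F c"
    using a b ba by (simp add: abelianizing_mult_u_mult_u tga_mult_scale_left mult.assoc u_one
        tga_mult_scale_right tga_mult_one[OF abelianizing_closed])
  finally show ?thesis
    using fun_space.scale_eq_imp_multiple a b cocycle_neq_0
    by (metis inv_closed m_closed mult_eq_0_iff)
qed

lemma abelianizing_mult_u_derived: "k \<in> G' \<Longrightarrow> \<exists>\<mu>. c \<star> u k = \<mu> *\<^sub>F c"
  unfolding derived_def
proof (induction k rule: generate.induct)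
  case one
  show ?case using u_one tga_mult_scale_right tga_mult_one[OF abelianizing_closed] by metis
next
  case (incl h)
  then show ?case using abelianizing_mult_u_commutator by blast
next
  case (inv h)
  then obtain a b where ab: "a \<in> carrier G" "b \<in> carrier G" "h = a \<otimes> b \<otimes> inv a \<otimes> inv b" by blast
  then have "inv h = b \<otimes> a \<otimes> inv b \<otimes> inv a" by (simp add: inv_mult_group m_assoc)
  then show ?case using abelianizing_mult_u_commutator[OF ab(2) ab(1)] by simp
next
  case (eng h1 h2)
  then obtain \<mu>1 \<mu>2 where "c \<star> u h1 = \<mu>1 *\<^sub>F c" "c \<star> u h2 = \<mu>2 *\<^sub>F c" by blast
  moreover have h: "h1 \<in> carrier G" "h2 \<in> carrier G"
    using eng.hyps derived_subset unfolding derived_def by auto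
  ultimately have "\<alpha> h1 h2 *\<^sub>F (c \<star> u (h1 \<otimes> h2)) = (\<mu>1 * \<mu>2) *\<^sub>F c"
    using abelianizing_mult_u_mult_u[OF h] by (simp add: tga_mult_scale_left)
  then show ?case using fun_space.scale_eq_imp_multiple cocycle_neq_0[OF h] by blast
qed

definition coset_scalar :: "'g \<Rightarrow> 'f" where
  "coset_scalar x = (SOME t. c \<star> u x = t *\<^sub>F (c \<star> u (abel_rep (G' #> x))))"

lemma coset_scalar:
  assumes x: "x \<in> carrier G"
  shows "c \<star> u x = coset_scalar x *\<^sub>F (c \<star> u (abel_rep (G' #> x)))" "coset_scalar x \<noteq> 0"
proof -
  let ?r = "abel_rep (G' #> x)"
  obtain n where n: "n \<in> G'" "x = n \<otimes> ?r" using derived_mult_abel_rep[OF x] .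
  have nr: "n \<in> carrier G" "?r \<in> carrier G" using n(1) derived_subset abel_rep_closed[OF x] by auto
  obtain \<mu> where "c \<star> u n = \<mu> *\<^sub>F c" using abelianizing_mult_u_derived[OF n(1)] by blast
  then have "\<alpha> n ?r *\<^sub>F (c \<star> u x) = \<mu> *\<^sub>F (c \<star> u ?r)"
    using abelianizing_mult_u_mult_u[OF nr] n(2) by (simp add: tga_mult_scale_left)
  then have "\<exists>t. c \<star> u x = t *\<^sub>F (c \<star> u ?r)"
    using fun_space.scale_eq_imp_multiple cocycle_neq_0[OF nr] by blast
  then show eq: "c \<star> u x = coset_scalar x *\<^sub>F (c \<star> u ?r)"
    unfolding coset_scalar_def by (rule someI_ex)
  show "coset_scalar x \<noteq> 0"
    using eq abelianizing_mult_u_neq_0[OF x] by auto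
qed

definition abel_cocycle :: "'g set \<Rightarrow> 'g set \<Rightarrow> 'f" where
  "abel_cocycle p q = \<alpha> (abel_rep p) (abel_rep q) * coset_scalar (abel_rep p \<otimes> abel_rep q)"

lemma abel_cocycle_factorization:
  assumes x: "x \<in> carrier G" and y: "y \<in> carrier G"
  shows "\<alpha> x y * coset_scalar (x \<otimes> y) =
    coset_scalar x * coset_scalar y * abel_cocycle (G' #> x) (G' #> y)"
proof -
  let ?rx = "abel_rep (G' #> x)" and ?ry = "abel_rep (G' #> y)"
    and ?rxy = "abel_rep (G' #> (x \<otimes> y))"
  have r: "?rx \<in> carrier G" "?ry \<in> carrier G" using abel_rep_closed x y by auto
  have "G' #> (?rx \<otimes> ?ry) = G' #> (x \<otimes> y)"
    using abel_coset_mult[OF r] abel_coset_mult[OF x y] abel_rep_coset[OF x] abel_rep_coset[OF y]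
    by simp
  then have rr: "c \<star> u (?rx \<otimes> ?ry) = coset_scalar (?rx \<otimes> ?ry) *\<^sub>F (c \<star> u ?rxy)"
    using coset_scalar(1)[of "?rx \<otimes> ?ry"] r by simp
  have "(\<alpha> x y * coset_scalar (x \<otimes> y)) *\<^sub>F (c \<star> u ?rxy) = c \<star> u x \<star> u y"
    using abelianizing_mult_u_mult_u[OF x y] coset_scalar(1)[of "x \<otimes> y"] x y by simp
  also have "\<dots> = coset_scalar x *\<^sub>F (c \<star> u y \<star> u ?rx)"
    using coset_scalar(1)[OF x] abelianizing_mult_u_comm[OF r(1) y]
    by (simp add: tga_mult_scale_left)
  also have "\<dots> = (coset_scalar x * coset_scalar y) *\<^sub>F (c \<star> u ?rx \<star> u ?ry)"
    using coset_scalar(1)[OF y] abelianizing_mult_u_comm[OF r(2) r(1)]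
    by (simp add: tga_mult_scale_left)
  also have "\<dots> =
      (coset_scalar x * coset_scalar y * abel_cocycle (G' #> x) (G' #> y)) *\<^sub>F (c \<star> u ?rxy)"
    using abelianizing_mult_u_mult_u[OF r] rr by (simp add: abel_cocycle_def mult.assoc)
  finally show ?thesis
    using abelianizing_mult_u_neq_0[OF abel_rep_closed[OF m_closed[OF x y]]] by simp
qed

lemma abel_cocycle_sym:
  assumes p: "p \<in> carrier (abelianization G)" and q: "q \<in> carrier (abelianization G)"
  shows "abel_cocycle p q = abel_cocycle q p"
proof -
  let ?a = "abel_rep p" and ?b = "abel_rep q"
  have ab: "?a \<in> carrier G" "?b \<in> carrier G" using abel_rep p q by auto
  let ?r = "abel_rep (G' #> (?a \<otimes> ?b))"
  have "(\<alpha> ?a ?b * coset_scalar (?a \<otimes> ?b)) *\<^sub>F (c \<star> u ?r) = c \<star> u ?a \<star> u ?b"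
    using abelianizing_mult_u_mult_u[OF ab] coset_scalar(1)[of "?a \<otimes> ?b"] ab by simp
  also have "\<dots> = c \<star> u ?b \<star> u ?a" using abelianizing_mult_u_comm[OF ab] .
  also have "\<dots> = (\<alpha> ?b ?a * coset_scalar (?b \<otimes> ?a)) *\<^sub>F (c \<star> u ?r)"
    using abelianizing_mult_u_mult_u[OF ab(2) ab(1)] coset_scalar(1)[of "?b \<otimes> ?a"] ab
      abel_coset_comm[OF ab] by simp
  finally have "(\<alpha> ?a ?b * coset_scalar (?a \<otimes> ?b)) *\<^sub>F (c \<star> u ?r)
      = (\<alpha> ?b ?a * coset_scalar (?b \<otimes> ?a)) *\<^sub>F (c \<star> u ?r)" .
  then show ?thesis
    unfolding abel_cocycle_def
    using abelianizing_mult_u_neq_0[OF abel_rep_closed[OF m_closed[OF ab]]]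
    by simp
qed

end

lemma commutative_simple_component_iff_abelianizing:
  assumes char: "of_nat (order G) \<noteq> (0::'f)"
  shows "has_commutative_simple_component G \<alpha> \<longleftrightarrow> (\<exists>c. abelianizing c)"
proof
  assume "has_commutative_simple_component G \<alpha>"
  then obtain I where I: "tga_simple_component G \<alpha> I" and comm: "\<forall>a\<in>I. \<forall>b\<in>I. a \<star> b = b \<star> a"
    unfolding has_commutative_simple_component_def by blast
  have I_ideal: "tga_ideal G \<alpha> I" and "I \<noteq> {0}"
    using I unfolding tga_simple_component_def zero_fun_def by auto
  then obtain a b where "a \<in> I" "b \<in> I" "b \<star> a \<noteq> 0"
    using square_zero_ideal[OF I_ideal _ char] by blast
  then show "\<exists>c. abelianizing c" using commutative_ideal_abelianizing[OF I_ideal comm] by blast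
qed (use abelianizing_imp_commutative_simple_component in blast)

lemma abelianizing_imp_inflation:
  assumes c: "abelianizing c"
  shows "\<exists>\<beta>. two_cocycle (abelianization G) \<beta> \<and> in_Ext (abelianization G) \<beta> \<and>
    cohomologous G (inflation G \<beta>) \<alpha>"
proof (intro exI conjI)
  let ?\<beta> = "abel_cocycle c"
  show coh: "cohomologous G (inflation G ?\<beta>) \<alpha>"
    unfolding cohomologous_def
  proof (intro exI[of _ "coset_scalar c"] conjI ballI)
    fix x y assume "x \<in> carrier G" "y \<in> carrier G"
    then show "\<alpha> x y =
        inflation G ?\<beta> x y * coset_scalar c x * coset_scalar c y / coset_scalar c (x \<otimes> y)"
      using abel_cocycle_factorization[OF c] coset_scalar(2)[OF c]
      by (simp add: inflation_apply field_simps)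
  qed (use coset_scalar(2)[OF c] in blast)
  show cocycle: "two_cocycle (abelianization G) ?\<beta>"
    using two_cocycle_of_inflation two_cocycle_cohomologous[OF is_monoid cocycle]
      cohomologous_sym[OF is_monoid coh] by blast
  show "in_Ext (abelianization G) ?\<beta>"
    unfolding in_Ext_def symmetric_cocycle_def
    using cocycle abel_cocycle_sym[OF c] cohomologous_refl by blast
qed

section \<open>Symmetric cocycles of the abelianization\<close>

context
  fixes \<gamma> :: "'g set \<Rightarrow> 'g set \<Rightarrow> 'f" and h :: "'g \<Rightarrow> 'f"
  assumes \<gamma>_sym: "symmetric_cocycle (abelianization G) \<gamma>"
    and h_neq_0: "\<And>x. x \<in> carrier G \<Longrightarrow> h x \<noteq> 0"
    and \<alpha>_eq: "\<And>x y. x \<in> carrier G \<Longrightarrow> y \<in> carrier G \<Longrightarrow>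
      \<alpha> x y = \<gamma> (G' #> x) (G' #> y) * h x * h y / h (x \<otimes> y)"
begin

definition v :: "'g \<Rightarrow> 'g \<Rightarrow> 'f" where "v x = (1 / h x) *\<^sub>F u x"

definition derived_sum :: "'g \<Rightarrow> 'f" where "derived_sum = (\<Sum>n\<in>G'. v n)"

lemma v_closed: "x \<in> carrier G \<Longrightarrow> v x \<in> A"
  unfolding v_def by (intro scale_closed u_closed)

lemma u_eq_v: "x \<in> carrier G \<Longrightarrow> u x = h x *\<^sub>F v x"
  using h_neq_0 by (simp add: v_def)

lemma v_mult_v: "x \<in> carrier G \<Longrightarrow> y \<in> carrier G \<Longrightarrow> v x \<star> v y = \<gamma> (G' #> x) (G' #> y) *\<^sub>F v (x \<otimes> y)"
  using h_neq_0[of x] h_neq_0[of y] h_neq_0[of "x \<otimes> y"]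
  by (simp add: v_def tga_mult_scale_left tga_mult_scale_right u_mult_u \<alpha>_eq)

lemma \<gamma>_derived:
  assumes "x \<in> carrier G" "n \<in> G'"
  shows "\<gamma> (G' #> x) (G' #> n) = \<gamma> G' G'" "\<gamma> (G' #> n) (G' #> x) = \<gamma> G' G'"
  using two_cocycle_unit[OF group.is_monoid[OF abelianization_group] _ abel_coset_closed[OF assms(1)],
      of \<gamma>] \<gamma>_sym abel_coset_derived[OF assms(2)]
  unfolding symmetric_cocycle_def by auto

lemma \<gamma>_one_neq_0: "\<gamma> G' G' \<noteq> 0"
  using \<gamma>_sym monoid.one_closed[OF group.is_monoid[OF abelianization_group]]
  unfolding symmetric_cocycle_def two_cocycle_def by simp

lemma derived_sum_closed: "derived_sum \<in> A"
  unfolding derived_sum_def using derived_subset by (intro sum_closed v_closed) blast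

lemma derived_sum_mult_v_comm: "g \<in> carrier G \<Longrightarrow> derived_sum \<star> v g = v g \<star> derived_sum"
proof -
  assume g: "g \<in> carrier G"
  have "derived_sum \<star> v g = (\<Sum>n\<in>G'. \<gamma> G' G' *\<^sub>F v (n \<otimes> g))"
    unfolding derived_sum_def using g derived_subset \<gamma>_derived
    by (auto simp: tga_mult_sum_left v_mult_v intro!: sum.cong)
  also have "\<dots> = (\<Sum>n\<in>G'. \<gamma> G' G' *\<^sub>F v (g \<otimes> n))"
    using sum_rcoset[OF derived_subgroup g, of "\<lambda>y. \<gamma> G' G' *\<^sub>F v y"]
      sum_lcoset[OF derived_subgroup g, of "\<lambda>y. \<gamma> G' G' *\<^sub>F v y"]
      normal.coset_eq[OF derived_self_is_normal] g by simp
  also have "\<dots> = v g \<star> derived_sum"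
    unfolding derived_sum_def using g derived_subset \<gamma>_derived
    by (auto simp: tga_mult_sum_right v_mult_v intro!: sum.cong)
  finally show ?thesis .
qed

lemma derived_sum_mult_v_derived: "n \<in> G' \<Longrightarrow> derived_sum \<star> v n = \<gamma> G' G' *\<^sub>F derived_sum"
proof -
  assume n: "n \<in> G'"
  have "v m \<star> v n = \<gamma> G' G' *\<^sub>F v (m \<otimes> n)" if "m \<in> G'" for m
    using v_mult_v \<gamma>_derived(1) that n derived_subset by (metis subsetD)
  then have "derived_sum \<star> v n = (\<Sum>m\<in>G'. \<gamma> G' G' *\<^sub>F v (m \<otimes> n))"
    unfolding derived_sum_def by (simp add: tga_mult_sum_left)
  also have "\<dots> = (\<Sum>m\<in>G'. \<gamma> G' G' *\<^sub>F v m)"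
    using sum_rcoset[OF derived_subgroup, of n "\<lambda>y. \<gamma> G' G' *\<^sub>F v y"] abel_coset_derived[OF n]
      n derived_subset by auto
  finally show ?thesis unfolding derived_sum_def by (simp add: fun_space.scale_sum_right)
qed

lemma derived_sum_mult_v_shift:
  assumes x: "x \<in> carrier G" and n: "n \<in> G'"
  shows "derived_sum \<star> v (x \<otimes> n) = derived_sum \<star> v x"
proof -
  have nG: "n \<in> carrier G" using n derived_subset by blast
  have "\<gamma> G' G' *\<^sub>F (derived_sum \<star> v (x \<otimes> n)) = derived_sum \<star> (v x \<star> v n)"
    using v_mult_v[OF x nG] \<gamma>_derived[OF x n] by (simp add: tga_mult_scale_right)
  also have "\<dots> = v x \<star> (derived_sum \<star> v n)"
    using tga_mult_assoc[OF derived_sum_closed v_closed[OF x] v_closed[OF nG]]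
      tga_mult_assoc[OF v_closed[OF x] derived_sum_closed v_closed[OF nG]]
      derived_sum_mult_v_comm[OF x] by simp
  also have "\<dots> = \<gamma> G' G' *\<^sub>F (derived_sum \<star> v x)"
    using derived_sum_mult_v_derived[OF n] derived_sum_mult_v_comm[OF x]
    by (simp add: tga_mult_scale_right)
  finally show ?thesis using \<gamma>_one_neq_0 by simp
qed

lemma derived_sum_abelianizing: "abelianizing derived_sum"
  unfolding abelianizing_def
proof (intro conjI ballI)
  show "derived_sum \<in> A" by (rule derived_sum_closed)
  have "derived_sum \<one> = (\<Sum>n\<in>G'. if \<one> = n then 1 / h n else 0)"
    by (simp add: derived_sum_def v_def sum_fun_apply scale_fun_def u_def if_distrib cong: if_cong)
  then have "derived_sum \<one> = 1 / h \<one>"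
    using subgroup.one_closed[OF derived_subgroup] finite_subset[OF derived_subset finite_carrier]
    by simp
  then show "derived_sum \<noteq> 0" using h_neq_0[of \<one>]
    by (metis divide_eq_0_iff one_closed zero_fun_apply one_neq_zero)
  show "derived_sum \<star> r = r \<star> derived_sum" if "r \<in> A" for r
    using central_if_central_on_basis[OF _ that] derived_sum_mult_v_comm u_eq_v
    by (simp add: tga_mult_scale_left tga_mult_scale_right)
  show "derived_sum \<star> (r \<star> s) = derived_sum \<star> (s \<star> r)" if "r \<in> A" "s \<in> A" for r s
  proof (rule swap_if_swaps_on_basis[OF _ that])
    fix g k assume g: "g \<in> carrier G" and k: "k \<in> carrier G"
    have "derived_sum \<star> v (k \<otimes> g) = derived_sum \<star> v (g \<otimes> k)"
      using derived_sum_mult_v_shift[OF m_closed[OF g k] commutator_in_derived[OF g k]] g k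
      by (simp add: m_assoc[symmetric])
    moreover have "\<gamma> (G' #> g) (G' #> k) = \<gamma> (G' #> k) (G' #> g)"
      using \<gamma>_sym abel_coset_closed g k unfolding symmetric_cocycle_def by blast
    ultimately show "derived_sum \<star> (u g \<star> u k) = derived_sum \<star> (u k \<star> u g)"
      using g k by (simp add: u_eq_v v_mult_v tga_mult_scale_left tga_mult_scale_right mult.commute)
  qed
qed

end

lemma inflation_imp_abelianizing:
  assumes "in_Ext (abelianization G) \<beta>" "cohomologous G (inflation G \<beta>) \<alpha>"
  shows "\<exists>c. abelianizing c"
proof -
  obtain \<gamma> where \<gamma>: "symmetric_cocycle (abelianization G) \<gamma>" "cohomologous (abelianization G) \<beta> \<gamma>"
    using assms(1) unfolding in_Ext_def by blast
  have "cohomologous G (inflation G \<gamma>) \<alpha>"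
    using cohomologous_trans[OF is_monoid
        cohomologous_sym[OF is_monoid cohomologous_inflation[OF \<gamma>(2)]] assms(2)] .
  then obtain h where "\<forall>x\<in>carrier G. h x \<noteq> 0"
    "\<forall>x\<in>carrier G. \<forall>y\<in>carrier G. \<alpha> x y = inflation G \<gamma> x y * h x * h y / h (x \<otimes> y)"
    unfolding cohomologous_def by blast
  then have "abelianizing (derived_sum h)"
    using derived_sum_abelianizing[OF \<gamma>(1), of h] by (simp add: inflation_apply)
  then show ?thesis by blast
qed

end

theorem proposition2p3:
  fixes G :: "'g monoid" and \<alpha> :: "'g \<Rightarrow> 'g \<Rightarrow> 'f::field"
  assumes "group G" and "finite (carrier G)"
    and "\<not> CHAR('f) dvd order G"
    and "two_cocycle G \<alpha>"
  shows "has_commutative_simple_component G \<alpha> \<longleftrightarrow>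
    (\<exists>\<beta>. two_cocycle (abelianization G) \<beta> \<and> in_Ext (abelianization G) \<beta> \<and>
         cohomologous G (inflation G \<beta>) \<alpha>)"
proof -
  interpret twisted_group_algebra G \<alpha>
    using assms unfolding twisted_group_algebra_def twisted_group_algebra_axioms_def by blast
  have char: "of_nat (order G) \<noteq> (0::'f)"
    using assms(3) by (simp add: of_nat_eq_0_iff_char_dvd)
  show ?thesis
    unfolding commutative_simple_component_iff_abelianizing[OF char]
    using abelianizing_imp_inflation inflation_imp_abelianizing by blast
qed

end
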